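(* Let $G\in\mathfrak D_4$ and let $\Upsilon\subseteq G$ be a subgraph isomorphic to the Mycielski–Grötzsch graph with vertices labelled $a_j,b_j$ ($j\in\mathbb Z/5\mathbb Z$), $c$. Then at least one of $a_1,a_2,a_3$ is reliable; that is, there exists $i\in\{1,2,3\}$ such that no vertex of $G$ is adjacent to all three of $a_{i-1},a_{i+1},b_i$.
   Context: $\mathfrak D_4$ is the class of (finite) maximal triangle-free graphs satisfying property $\mathscr{D}_4$ (for every $m\in\{1,2,3,4\}$ and every sequence $x_1,\dots,x_{3m}$ of not necessarily distinct vertices there is a vertex $y$ with $|\{i: x_iy\in E(G)\}|\ge m+1$). Maximal triangle-free: no triangle, and adding any new edge creates a triangle. Mycielski–Grötzsch graph: vertices $a_j,b_j$ ($j\in\mathbb Z/5\mathbb Z$), $c$; edges all pairs $a_jc$, $a_jb_{j\pm2}$, $b_jb_{j+2}$. *)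

theory Defs
  imports Main
begin

definition finite_graph :: "'a set \<Rightarrow> ('a \<Rightarrow> 'a \<Rightarrow> bool) \<Rightarrow> bool" where
  "finite_graph V E \<longleftrightarrow> finite V \<and> (\<forall>x y. E x y \<longrightarrow> x \<in> V \<and> y \<in> V)
     \<and> (\<forall>x y. E x y \<longrightarrow> E y x) \<and> (\<forall>x. \<not> E x x)"

definition triangle_free :: "'a set \<Rightarrow> ('a \<Rightarrow> 'a \<Rightarrow> bool) \<Rightarrow> bool" where
  "triangle_free V E \<longleftrightarrow> (\<forall>x\<in>V. \<forall>y\<in>V. \<forall>z\<in>V. \<not> (E x y \<and> E y z \<and> E x z))"

definition maximal_triangle_free :: "'a set \<Rightarrow> ('a \<Rightarrow> 'a \<Rightarrow> bool) \<Rightarrow> bool" where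
  "maximal_triangle_free V E \<longleftrightarrow> finite_graph V E \<and> triangle_free V E \<and>
     (\<forall>u\<in>V. \<forall>v\<in>V. u \<noteq> v \<and> \<not> E u v \<longrightarrow> (\<exists>w\<in>V. E u w \<and> E w v))"

definition prop_D4 :: "'a set \<Rightarrow> ('a \<Rightarrow> 'a \<Rightarrow> bool) \<Rightarrow> bool" where
  "prop_D4 V E \<longleftrightarrow> (\<forall>m::nat. 1 \<le> m \<and> m \<le> 4 \<longrightarrow>
     (\<forall>x::nat \<Rightarrow> 'a. (\<forall>i<3*m. x i \<in> V) \<longrightarrow>
        (\<exists>y\<in>V. card {i. i < 3*m \<and> E (x i) y} \<ge> m + 1)))"

definition in_D4 :: "'a set \<Rightarrow> ('a \<Rightarrow> 'a \<Rightarrow> bool) \<Rightarrow> bool" where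
  "in_D4 V E \<longleftrightarrow> maximal_triangle_free V E \<and> prop_D4 V E"

text \<open>A subgraph of (V,E) isomorphic to the Mycielski--Groetzsch graph, with vertices
a j, b j (j in Z/5Z, represented by 0..4, indices read mod 5) and c: the 11 vertices
are distinct vertices of V and every edge of the Mycielski--Groetzsch graph is an edge of E.\<close>
definition MG_subgraph :: "'a set \<Rightarrow> ('a \<Rightarrow> 'a \<Rightarrow> bool) \<Rightarrow> (nat \<Rightarrow> 'a) \<Rightarrow> (nat \<Rightarrow> 'a) \<Rightarrow> 'a \<Rightarrow> bool" where
  "MG_subgraph V E a b c \<longleftrightarrow>
     inj_on a {0..<5} \<and> inj_on b {0..<5} \<and> a ` {0..<5} \<inter> b ` {0..<5} = {} \<and>
     c \<notin> a ` {0..<5} \<and> c \<notin> b ` {0..<5} \<and>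
     a ` {0..<5} \<subseteq> V \<and> b ` {0..<5} \<subseteq> V \<and> c \<in> V \<and>
     (\<forall>j<5. E (a j) c \<and> E (a j) (b ((j + 2) mod 5)) \<and> E (a j) (b ((j + 3) mod 5))
        \<and> E (b j) (b ((j + 2) mod 5)))"

end

theory Submission
  imports Defs
begin

text \<open>Suppose each of \<open>a\<^sub>1, a\<^sub>2, a\<^sub>3\<close> is unreliable, witnessed by vertices \<open>y\<^sub>1, y\<^sub>2, y\<^sub>3\<close>.
Property \<open>\<D>\<^sub>4\<close> with \<open>m = 3\<close>, applied to \<open>a\<^sub>0, a\<^sub>2, a\<^sub>4, b\<^sub>1, b\<^sub>2, b\<^sub>3, y\<^sub>1, y\<^sub>2, y\<^sub>3\<close>, gives a
vertex \<open>z\<close> with four neighbours among them; triangle-freeness leaves three possible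
neighbourhoods for \<open>z\<close>. In each case \<open>\<D>\<^sub>4\<close> with \<open>m = 4\<close>, applied to twelve vertices, gives
a vertex \<open>w\<close> with five neighbours among them. But in a triangle-free graph a vertex has at
most \<open>\<lfloor>n/2\<rfloor>\<close> neighbours on a closed walk of length \<open>n\<close>, and a suitably weighted family of
closed walks covering the twelve vertices uniformly bounds the number of neighbours of \<open>w\<close>
by four.\<close>

definition nbr_count :: "('a \<Rightarrow> 'a \<Rightarrow> bool) \<Rightarrow> 'a \<Rightarrow> 'a list \<Rightarrow> nat" where
  "nbr_count E w xs = (\<Sum>x\<leftarrow>xs. of_bool (E x w))"

lemma nbr_count_Nil: "nbr_count E w [] = 0"
  and nbr_count_Cons: "nbr_count E w (x # xs) = of_bool (E x w) + nbr_count E w xs"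
  by (simp_all add: nbr_count_def)

lemma length_filter_eq_sum_list_of_bool:
  "length (filter P xs) = (\<Sum>x\<leftarrow>xs. of_bool (P x) :: nat)"
  by (induction xs) auto

lemma sum_list_rotate1: "sum_list (rotate1 xs) = (sum_list xs :: 'a::comm_monoid_add)"
  by (cases xs) (simp_all add: add.commute)

lemma list_all2_sum_list_le:
  fixes f :: "'a \<Rightarrow> nat"
  assumes "list_all2 (\<lambda>x y. f x + f y \<le> 1) xs ys"
  shows "sum_list (map f xs) + sum_list (map f ys) \<le> length xs"
  using assms by (induction rule: list_all2_induct) auto

lemma closed_walk_sum_list_le_half:
  fixes f :: "'a \<Rightarrow> nat"
  assumes "list_all2 (\<lambda>x y. f x + f y \<le> 1) xs (rotate1 xs)"
  shows "sum_list (map f xs) \<le> length xs div 2"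
proof -
  have "2 * sum_list (map f xs) \<le> length xs"
    using list_all2_sum_list_le[OF assms] by (simp add: rotate1_map[symmetric] sum_list_rotate1)
  then show ?thesis by presburger
qed

lemma finite_graph_sym: "finite_graph V E \<Longrightarrow> E x y \<Longrightarrow> E y x"
  unfolding finite_graph_def by blast

lemma finite_graph_edge_in_V: "finite_graph V E \<Longrightarrow> E x y \<Longrightarrow> x \<in> V \<and> y \<in> V"
  unfolding finite_graph_def by blast

lemma triangle_free_no_common_neighbour:
  assumes "finite_graph V E" "triangle_free V E" "E x y"
  shows "\<not> (E x w \<and> E y w)"
proof
  assume xy_w: "E x w \<and> E y w"
  then have "x \<in> V" "y \<in> V" "w \<in> V"
    using finite_graph_edge_in_V[OF assms(1)] by blast+
  with assms(2,3) xy_w show False unfolding triangle_free_def by blast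
qed

lemma triangle_free_closed_walk_nbr_count:
  assumes "finite_graph V E" "triangle_free V E" "list_all2 E xs (rotate1 xs)"
  shows "nbr_count E w xs \<le> length xs div 2"
  unfolding nbr_count_def
proof (rule closed_walk_sum_list_le_half)
  have "of_bool (E x w) + of_bool (E y w) \<le> (1::nat)" if "E x y" for x y
    using triangle_free_no_common_neighbour[OF assms(1,2) that, of w] by auto
  with assms(3) show "list_all2 (\<lambda>x y. of_bool (E x w) + of_bool (E y w) \<le> (1::nat)) xs (rotate1 xs)"
    by (rule list_all2_mono)
qed

lemma prop_D4_nbr_count:
  assumes "prop_D4 V E" "set xs \<subseteq> V" "length xs = 3 * m" "1 \<le> m" "m \<le> 4"
  obtains y where "y \<in> V" "m + 1 \<le> nbr_count E y xs"
proof -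
  have "\<forall>i<3 * m. xs ! i \<in> V" using assms(2,3) by auto
  then obtain y where "y \<in> V" "m + 1 \<le> card {i. i < 3 * m \<and> E (xs ! i) y}"
    using assms(1,4,5) unfolding prop_D4_def by blast
  moreover have "card {i. i < 3 * m \<and> E (xs ! i) y} = nbr_count E y xs"
    using assms(3)
    by (simp add: nbr_count_def length_filter_conv_card length_filter_eq_sum_list_of_bool[symmetric])
  ultimately show ?thesis using that by simp
qed

lemma MG_subgraph_edges:
  assumes "MG_subgraph V E a b c"
  shows "E (a 0) c" "E (a 1) c" "E (a 2) c" "E (a 3) c" "E (a 4) c"
    and "E (a 0) (b 2)" "E (a 1) (b 3)" "E (a 2) (b 4)" "E (a 3) (b 0)" "E (a 4) (b 1)"
    and "E (a 0) (b 3)" "E (a 1) (b 4)" "E (a 2) (b 0)" "E (a 3) (b 1)" "E (a 4) (b 2)"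
    and "E (b 0) (b 2)" "E (b 1) (b 3)" "E (b 2) (b 4)" "E (b 3) (b 0)" "E (b 4) (b 1)"
proof -
  have H: "\<And>j. j < 5 \<Longrightarrow> E (a j) c \<and> E (a j) (b ((j + 2) mod 5)) \<and> E (a j) (b ((j + 3) mod 5))
      \<and> E (b j) (b ((j + 2) mod 5))"
    using assms unfolding MG_subgraph_def by blast
  have mod5: "(0 + 2) mod 5 = (2::nat)" "(0 + 3) mod 5 = (3::nat)" "(1 + 2) mod 5 = (3::nat)"
    "(1 + 3) mod 5 = (4::nat)" "(2 + 2) mod 5 = (4::nat)" "(2 + 3) mod 5 = (0::nat)"
    "(3 + 2) mod 5 = (0::nat)" "(3 + 3) mod 5 = (1::nat)" "(4 + 2) mod 5 = (1::nat)"
    "(4 + 3) mod 5 = (2::nat)"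
    by simp_all
  have "E (a 0) c \<and> E (a 0) (b 2) \<and> E (a 0) (b 3) \<and> E (b 0) (b 2)" using H[of 0] unfolding mod5 by simp
  moreover have "E (a 1) c \<and> E (a 1) (b 3) \<and> E (a 1) (b 4) \<and> E (b 1) (b 3)" using H[of 1] unfolding mod5 by simp
  moreover have "E (a 2) c \<and> E (a 2) (b 4) \<and> E (a 2) (b 0) \<and> E (b 2) (b 4)" using H[of 2] unfolding mod5 by simp
  moreover have "E (a 3) c \<and> E (a 3) (b 0) \<and> E (a 3) (b 1) \<and> E (b 3) (b 0)" using H[of 3] unfolding mod5 by simp
  moreover have "E (a 4) c \<and> E (a 4) (b 1) \<and> E (a 4) (b 2) \<and> E (b 4) (b 1)" using H[of 4] unfolding mod5 by simp
  ultimately show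
    "E (a 0) c" "E (a 1) c" "E (a 2) c" "E (a 3) c" "E (a 4) c"
    "E (a 0) (b 2)" "E (a 1) (b 3)" "E (a 2) (b 4)" "E (a 3) (b 0)" "E (a 4) (b 1)"
    "E (a 0) (b 3)" "E (a 1) (b 4)" "E (a 2) (b 0)" "E (a 3) (b 1)" "E (a 4) (b 2)"
    "E (b 0) (b 2)" "E (b 1) (b 3)" "E (b 2) (b 4)" "E (b 3) (b 0)" "E (b 4) (b 1)"
    by blast+
qed

context
  fixes V :: "'v set" and E a b c y1 y2 y3
  assumes D4: "in_D4 V E" and MG: "MG_subgraph V E a b c"
    and y1: "E y1 (a 0)" "E y1 (a 2)" "E y1 (b 1)"
    and y2: "E y2 (a 1)" "E y2 (a 3)" "E y2 (b 2)"
    and y3: "E y3 (a 2)" "E y3 (a 4)" "E y3 (b 3)"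
begin

lemma graph: "finite_graph V E" and tri_free: "triangle_free V E" and D4_property: "prop_D4 V E"
  using D4 unfolding in_D4_def maximal_triangle_free_def by auto

lemmas edges = MG_subgraph_edges[OF MG] y1 y2 y3
\<comment> \<open>both spellings of \<open>1\<close>: simp turns \<open>b 1\<close> inside list literals into \<open>b (Suc 0)\<close>\<close>
lemmas adjacent = edges edges[THEN finite_graph_sym[OF graph]]
  edges[unfolded One_nat_def] edges[THEN finite_graph_sym[OF graph], unfolded One_nat_def]

lemma vertices_in_V: "set [a 0, a 1, a 2, a 3, a 4, b 0, b 1, b 2, b 3, b 4, c, y1, y2, y3] \<subseteq> V"
  using adjacent finite_graph_edge_in_V[OF graph] by auto

lemma closed_walk_nbr_count_le:
  "list_all2 E xs (rotate1 xs) \<Longrightarrow> length xs div 2 \<le> k \<Longrightarrow> nbr_count E w xs \<le> k"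
  using triangle_free_closed_walk_nbr_count[OF graph tri_free] order_trans by blast

lemma no_vertex_adjacent_to_a4_b3_y2:
  assumes "E (a 4) z" "E (b 3) z" "E y2 z"
  shows False
proof -
  let ?L = "[a 0, a 2, a 3, a 4, b 0, b 1, b 2, b 3, c, y1, y2, z]"
  have "z \<in> V" using finite_graph_edge_in_V[OF graph assms(1)] by blast
  with vertices_in_V obtain w where w: "5 \<le> nbr_count E w ?L"
    using prop_D4_nbr_count[OF D4_property, where m = 4 and xs = ?L] by auto
  \<comment> \<open>every vertex of \<open>?L\<close> lies on exactly 21 of the weighted closed walks, whose
    capacities add up to \<open>104 < 21 * 5\<close>\<close>
  have "21 * nbr_count E w ?L = 5 * nbr_count E w [y2, z]
      + nbr_count E w [a 3, b 0, b 2, a 4, c] + 6 * nbr_count E w [a 3, b 0, b 3, z, y2]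
      + 6 * nbr_count E w [a 2, b 0, b 2, y2, a 3, b 1, y1] + nbr_count E w [a 0, b 2, y2, z, b 3]
      + 3 * nbr_count E w [a 0, c, a 4, b 2, b 0, a 2, y1] + 5 * nbr_count E w [a 0, b 3, b 0, a 2, c]
      + 5 * nbr_count E w [a 2, c, a 3, b 1, y1] + 2 * nbr_count E w [a 2, c, a 4, z, b 3, b 1, y1]
      + 5 * nbr_count E w [a 0, c, a 4, b 1, y1] + 3 * nbr_count E w [a 3, b 1, a 4, b 2, y2]
      + 7 * nbr_count E w [a 0, b 2, a 4, z, b 3]"
    by (simp add: nbr_count_Cons nbr_count_Nil algebra_simps)
  also have "\<dots> \<le> 5 * 1 + 2 + 6 * 2 + 6 * 3 + 2 + 3 * 3 + 5 * 2 + 5 * 2 + 2 * 3 + 5 * 2 + 3 * 2 + 7 * 2"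
    using assms assms[THEN finite_graph_sym[OF graph]]
    by (intro add_mono mult_le_mono2 closed_walk_nbr_count_le)
      (simp_all add: adjacent)
  finally show False using w by simp
qed

lemma no_vertex_adjacent_to_a0_b1_y2_y3:
  assumes "E (a 0) z" "E (b 1) z" "E y2 z" "E y3 z"
  shows False
proof -
  let ?L = "[a 0, a 1, a 2, a 4, b 1, b 2, b 3, b 4, c, y2, y3, z]"
  have "z \<in> V" using finite_graph_edge_in_V[OF graph assms(1)] by blast
  with vertices_in_V obtain w where w: "5 \<le> nbr_count E w ?L"
    using prop_D4_nbr_count[OF D4_property, where m = 4 and xs = ?L] by auto
  have "6 * nbr_count E w ?L = 2 * nbr_count E w [a 0, b 2, b 4, a 2, c]
      + nbr_count E w [a 1, b 4, b 1, z, y2] + 2 * nbr_count E w [a 0, b 3, y3, a 4, c]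
      + nbr_count E w [a 0, c, a 2, y3, a 4, b 1, z] + 3 * nbr_count E w [a 2, b 4, b 2, a 4, y3]
      + 4 * nbr_count E w [a 1, b 3, b 1, z, y2] + nbr_count E w [a 0, b 2, y2, a 1, c]"
    by (simp add: nbr_count_Cons nbr_count_Nil algebra_simps)
  also have "\<dots> \<le> 2 * 2 + 2 + 2 * 2 + 3 + 3 * 2 + 4 * 2 + 2"
    using assms assms[THEN finite_graph_sym[OF graph]]
    by (intro add_mono mult_le_mono2 closed_walk_nbr_count_le)
      (simp_all add: adjacent)
  finally show False using w by simp
qed

lemma no_vertex_adjacent_to_a0_a2_y2:
  assumes "E (a 0) z" "E (a 2) z" "E y2 z"
  shows False
proof -
  let ?L = "[a 0, a 1, a 2, a 3, b 0, b 1, b 2, b 3, b 4, c, y2, z]"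
  have "z \<in> V" using finite_graph_edge_in_V[OF graph assms(1)] by blast
  with vertices_in_V obtain w where w: "5 \<le> nbr_count E w ?L"
    using prop_D4_nbr_count[OF D4_property, where m = 4 and xs = ?L] by auto
  have "8 * nbr_count E w ?L = nbr_count E w [a 2, b 4, b 1, a 3, c]
      + 2 * nbr_count E w [a 1, b 3, b 1, a 3, c] + 2 * nbr_count E w [a 0, c, a 1, y2, z]
      + nbr_count E w [a 1, b 4, a 2, z, y2] + 3 * nbr_count E w [a 2, b 0, b 3, b 1, b 4]
      + nbr_count E w [a 0, b 2, b 0, a 3, c] + 3 * nbr_count E w [a 0, b 2, b 4, a 2, z]
      + nbr_count E w [b 0, b 2] + 2 * nbr_count E w [a 0, c, a 3, y2, z]
      + 3 * nbr_count E w [a 1, b 3, b 0, b 2, y2] + 2 * nbr_count E w [a 3, b 1]"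
    by (simp add: nbr_count_Cons nbr_count_Nil algebra_simps)
  also have "\<dots> \<le> 2 + 2 * 2 + 2 * 2 + 2 + 3 * 2 + 2 + 3 * 2 + 1 + 2 * 2 + 3 * 2 + 2 * 1"
    using assms assms[THEN finite_graph_sym[OF graph]]
    by (intro add_mono mult_le_mono2 closed_walk_nbr_count_le)
      (simp_all add: adjacent)
  finally show False using w by simp
qed

lemma common_neighbourhood_cases:
  assumes "4 \<le> nbr_count E z [a 0, a 2, a 4, b 1, b 2, b 3, y1, y2, y3]"
  shows "E (a 4) z \<and> E (b 3) z \<and> E y2 z \<or> E (a 0) z \<and> E (b 1) z \<and> E y2 z \<and> E y3 z
    \<or> E (a 0) z \<and> E (a 2) z \<and> E y2 z"
proof -
  have excl: "\<not> (E (a 0) z \<and> E (b 2) z)" "\<not> (E (a 0) z \<and> E (b 3) z)" "\<not> (E y1 z \<and> E (a 0) z)"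
    "\<not> (E y1 z \<and> E (a 2) z)" "\<not> (E y3 z \<and> E (a 2) z)" "\<not> (E (a 4) z \<and> E (b 1) z)"
    "\<not> (E (a 4) z \<and> E (b 2) z)" "\<not> (E y3 z \<and> E (a 4) z)" "\<not> (E (b 1) z \<and> E (b 3) z)"
    "\<not> (E y1 z \<and> E (b 1) z)" "\<not> (E y2 z \<and> E (b 2) z)" "\<not> (E y3 z \<and> E (b 3) z)"
    by (rule triangle_free_no_common_neighbour[OF graph tri_free], rule edges)+
  show ?thesis
    by (insert assms excl, cases "E (a 0) z"; cases "E (a 2) z"; cases "E (a 4) z"; cases "E (b 1) z";
        cases "E (b 2) z"; cases "E (b 3) z"; cases "E y1 z"; cases "E y2 z"; cases "E y3 z";
        simp add: nbr_count_Cons nbr_count_Nil)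
qed

lemma no_unreliability_witnesses: False
proof -
  let ?L = "[a 0, a 2, a 4, b 1, b 2, b 3, y1, y2, y3]"
  obtain z where "4 \<le> nbr_count E z ?L"
    using prop_D4_nbr_count[OF D4_property, where m = 3 and xs = ?L] vertices_in_V by auto
  then show False
    using common_neighbourhood_cases no_vertex_adjacent_to_a4_b3_y2
      no_vertex_adjacent_to_a0_b1_y2_y3 no_vertex_adjacent_to_a0_a2_y2
    by blast
qed

end

theorem mainTheorem15:
  fixes V :: "'v set" and E :: "'v \<Rightarrow> 'v \<Rightarrow> bool"
    and a b :: "nat \<Rightarrow> 'v" and c :: 'v
  assumes "in_D4 V E"
    and "MG_subgraph V E a b c"
  shows "\<exists>i\<in>{1,2,3::nat}. \<not> (\<exists>y\<in>V. E y (a (i - 1)) \<and> E y (a (i + 1)) \<and> E y (b i))"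
proof (rule ccontr)
  assume "\<not> ?thesis"
  then have witness: "\<exists>y. E y (a (i - 1)) \<and> E y (a (i + 1)) \<and> E y (b i)" if "i \<in> {1, 2, 3}" for i
    using that by blast
  have "\<exists>y. E y (a 0) \<and> E y (a 2) \<and> E y (b 1)" using witness[of 1] by (simp add: eval_nat_numeral)
  moreover have "\<exists>y. E y (a 1) \<and> E y (a 3) \<and> E y (b 2)" using witness[of 2] by (simp add: eval_nat_numeral)
  moreover have "\<exists>y. E y (a 2) \<and> E y (a 4) \<and> E y (b 3)" using witness[of 3] by (simp add: eval_nat_numeral)
  ultimately show False
    using no_unreliability_witnesses[OF assms] by blast
qed

end
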